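(* Let $A$ be an associative algebra over a field $K$ with $A_0=\{0\}$. Then every weak multiplier of $A$ is a linear multiplier: $M(A)=M'(A)=LM(A)=LM'(A)$.
   Context: A map $T:A\to A$ (not assumed linear) is a weak multiplier if $xT(y)=T(x)y$ for all $x,y\in A$, and a multiplier if $xT(y)=T(xy)=T(x)y$ for all $x,y\in A$. $M(A)$, $M'(A)$ are the sets of multipliers and weak multipliers; $LM(A)$, $LM'(A)$ their subsets of $K$-linear maps. $A_0=\mathrm{Ann}_l(A)\cap\mathrm{Ann}_r(A)$ with $\mathrm{Ann}_l(A)=\{a: ax=0\ \forall x\}$, $\mathrm{Ann}_r(A)=\{a: xa=0\ \forall x\}$. *)

theory Defs
  imports Complex_Main
begin

definition assoc_algebra :: "('k::field \<Rightarrow> 'a::ring \<Rightarrow> 'a) \<Rightarrow> bool" where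
  "assoc_algebra s \<longleftrightarrow> vector_space s \<and>
     (\<forall>k x y. s k (x * y) = s k x * y \<and> s k (x * y) = x * s k y)"

definition ann_l :: "'a::ring set" where
  "ann_l = {a. \<forall>x. a * x = 0}"

definition ann_r :: "'a::ring set" where
  "ann_r = {a. \<forall>x. x * a = 0}"

definition A0 :: "'a::ring set" where
  "A0 = ann_l \<inter> ann_r"

definition weak_multiplier :: "('a::ring \<Rightarrow> 'a) \<Rightarrow> bool" where
  "weak_multiplier T \<longleftrightarrow> (\<forall>x y. x * T y = T x * y)"

definition multiplier :: "('a::ring \<Rightarrow> 'a) \<Rightarrow> bool" where
  "multiplier T \<longleftrightarrow> (\<forall>x y. x * T y = T (x * y) \<and> T (x * y) = T x * y)"

definition M :: "('a::ring \<Rightarrow> 'a) set" where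
  "M = {T. multiplier T}"

definition M' :: "('a::ring \<Rightarrow> 'a) set" where
  "M' = {T. weak_multiplier T}"

definition LM :: "('k::field \<Rightarrow> 'a::ring \<Rightarrow> 'a) \<Rightarrow> ('a \<Rightarrow> 'a) set" where
  "LM s = {T. multiplier T \<and> Vector_Spaces.linear s s T}"

definition LM' :: "('k::field \<Rightarrow> 'a::ring \<Rightarrow> 'a) \<Rightarrow> ('a \<Rightarrow> 'a) set" where
  "LM' s = {T. weak_multiplier T \<and> Vector_Spaces.linear s s T}"

end

theory Submission
  imports Defs
begin

text \<open>When no nonzero element annihilates the algebra from both sides, an element is determined
  by its products with all elements on the left and on the right. For a weak multiplier T the
  identity x T(y) = T(x) y lets one move T across products, so T(xy) and x T(y), T(x + y) and
  T(x) + T(y), T(k x) and k T(x) have the same two-sided products and therefore coincide.\<close>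

lemma eq_of_two_sided_products:
  fixes a b :: "'a::ring"
  assumes "(A0 :: 'a set) = {0}"
    and "\<And>z. z * a = z * b" and "\<And>z. a * z = b * z"
  shows "a = b"
proof -
  have "a - b \<in> A0"
    using assms(2,3) by (simp add: A0_def ann_l_def ann_r_def algebra_simps)
  with assms(1) have "a - b = 0" by blast
  then show ?thesis by simp
qed

lemma multiplier_imp_weak_multiplier: "multiplier T \<Longrightarrow> weak_multiplier T"
  by (simp add: multiplier_def weak_multiplier_def)

lemma weak_multiplier_mult:
  fixes T :: "'a::ring \<Rightarrow> 'a"
  assumes "(A0 :: 'a set) = {0}" and "weak_multiplier T"
  shows "T (x * y) = x * T y"
proof -
  have T: "\<And>x y. x * T y = T x * y" using assms(2) by (simp add: weak_multiplier_def)
  show ?thesis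
  proof (rule eq_of_two_sided_products[OF assms(1)])
    fix z
    have "z * T (x * y) = T z * x * y" using T by (simp add: mult.assoc)
    also have "\<dots> = z * (x * T y)" using T by (metis mult.assoc)
    finally show "z * T (x * y) = z * (x * T y)" .
    have "T (x * y) * z = x * y * T z" using T by simp
    also have "\<dots> = x * T y * z" using T by (metis mult.assoc)
    finally show "T (x * y) * z = x * T y * z" .
  qed
qed

lemma weak_multiplier_imp_multiplier:
  fixes T :: "'a::ring \<Rightarrow> 'a"
  assumes "(A0 :: 'a set) = {0}" and "weak_multiplier T"
  shows "multiplier T"
  using weak_multiplier_mult[OF assms] assms(2)
  by (simp add: multiplier_def weak_multiplier_def)

lemma weak_multiplier_add:
  fixes T :: "'a::ring \<Rightarrow> 'a"
  assumes "(A0 :: 'a set) = {0}" and "weak_multiplier T"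
  shows "T (x + y) = T x + T y"
proof -
  have T: "\<And>x y. x * T y = T x * y" using assms(2) by (simp add: weak_multiplier_def)
  show ?thesis
  proof (rule eq_of_two_sided_products[OF assms(1)])
    fix z
    have "z * T (x + y) = T z * (x + y)" using T by simp
    also have "\<dots> = z * (T x + T y)" using T by (metis distrib_left)
    finally show "z * T (x + y) = z * (T x + T y)" .
    have "T (x + y) * z = (x + y) * T z" using T by simp
    also have "\<dots> = (T x + T y) * z" using T by (metis distrib_right)
    finally show "T (x + y) * z = (T x + T y) * z" .
  qed
qed

lemma weak_multiplier_scale:
  fixes T :: "'a::ring \<Rightarrow> 'a" and s :: "'k::field \<Rightarrow> 'a \<Rightarrow> 'a"
  assumes "assoc_algebra s" and "(A0 :: 'a set) = {0}" and "weak_multiplier T"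
  shows "T (s k x) = s k (T x)"
proof -
  have T: "\<And>x y. x * T y = T x * y" using assms(3) by (simp add: weak_multiplier_def)
  have sl: "\<And>k x y. s k x * y = s k (x * y)" and sr: "\<And>k x y. x * s k y = s k (x * y)"
    using assms(1) unfolding assoc_algebra_def by metis+
  show ?thesis
  proof (rule eq_of_two_sided_products[OF assms(2)])
    fix z
    have "z * T (s k x) = s k (T z * x)" using T sr by metis
    also have "\<dots> = z * s k (T x)" using T sr by metis
    finally show "z * T (s k x) = z * s k (T x)" .
    have "T (s k x) * z = s k (x * T z)" using T sl by metis
    also have "\<dots> = s k (T x) * z" using T sl by metis
    finally show "T (s k x) * z = s k (T x) * z" .
  qed
qed

lemma weak_multiplier_linear:
  fixes T :: "'a::ring \<Rightarrow> 'a" and s :: "'k::field \<Rightarrow> 'a \<Rightarrow> 'a"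
  assumes "assoc_algebra s" and "(A0 :: 'a set) = {0}" and "weak_multiplier T"
  shows "Vector_Spaces.linear s s T"
proof -
  have "vector_space s" using assms(1) by (simp add: assoc_algebra_def)
  then show ?thesis
    using weak_multiplier_add[OF assms(2,3)] weak_multiplier_scale[OF assms]
    by (simp add: Vector_Spaces.linear_iff)
qed

theorem proposition5p1:
  fixes s :: "'k::field \<Rightarrow> 'a::ring \<Rightarrow> 'a"
  assumes "assoc_algebra s"
    and "(A0 :: 'a set) = {0}"
  shows "(M :: ('a \<Rightarrow> 'a) set) = M' \<and> (M' :: ('a \<Rightarrow> 'a) set) = LM s \<and> LM s = LM' s"
  unfolding M_def M'_def LM_def LM'_def
  using multiplier_imp_weak_multiplier weak_multiplier_imp_multiplier[OF assms(2)]
    weak_multiplier_linear[OF assms]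
  by blast

end
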